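(* Let $p/q$ be an even rational parameter and let $\rho(x,y)=(x,-y)$. Then the set of light points is invariant under $\rho$. More precisely: a point $z$ is a light point of type $\mathcal P$ (resp. $\mathcal Q$) on a horizontal unit segment if and only if $\rho(z)$ is a light point of type $\mathcal P$ (resp. $\mathcal Q$) on a horizontal unit segment; and $z$ is a light point of type $\mathcal P$ on a vertical unit segment if and only if $\rho(z)$ is a light point of type $\mathcal Q$ on a vertical unit segment.
   Context: An even rational parameter is a rational $p/q\in(0,1)$, $p,q$ positive coprime integers, with $pq$ even. Put $\omega=p+q$, $P=2p/\omega$, $Q=2q/\omega$. Families of lines: $\mathcal H$ = lines $y=n$, $\mathcal V$ = lines $x=n$ ($n\in\mathbb Z$), $\mathcal P$ = lines of slope $-P$ with integer $y$-intercept, $\mathcal Q$ = lines of slope $-Q$ with integer $y$-intercept. Functions mod $2\mathbb Z$, with values represented in $(-1,1]$: $F_H(x,y)=2Py$, $F_V(x,y)=2Px$, $F_P(x,y)=Py+P^2x+1$, $F_Q(x,y)=Py+PQx+1$. A unit segment is an edge of a unit square of the integer grid; horizontal ones lie on lines of $\mathcal H$ (set $A=H$), vertical ones on lines of $\mathcal V$ (set $A=V$). For $B\in\{P,Q\}$, a point $z$ of a unit segment is a light point of type $\mathcal B$ on that segment if $z$ lies on a line of the family $\mathcal B$ and $F_A(z)F_B(z)>0$ and $|F_B(z)|<|F_A(z)|$. *)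

theory Defs
  imports Complex_Main
begin

definition even_rational_parameter :: "int \<Rightarrow> int \<Rightarrow> bool" where
  "even_rational_parameter p q \<longleftrightarrow> 0 < p \<and> 0 < q \<and> p < q \<and> coprime p q \<and> even (p * q)"

definition omega :: "int \<Rightarrow> int \<Rightarrow> real" where
  "omega p q = real_of_int (p + q)"

definition PP :: "int \<Rightarrow> int \<Rightarrow> real" where
  "PP p q = 2 * real_of_int p / omega p q"

definition QQ :: "int \<Rightarrow> int \<Rightarrow> real" where
  "QQ p q = 2 * real_of_int q / omega p q"

text \<open>Representative of a real number modulo 2Z in the interval (-1,1].\<close>
definition red2 :: "real \<Rightarrow> real" where
  "red2 t = t - 2 * real_of_int \<lceil>(t - 1) / 2\<rceil>"

datatype family = FamH | FamV | FamP | FamQ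

fun on_family :: "int \<Rightarrow> int \<Rightarrow> family \<Rightarrow> real \<times> real \<Rightarrow> bool" where
  "on_family p q FamH (x, y) \<longleftrightarrow> (\<exists>n::int. y = real_of_int n)"
| "on_family p q FamV (x, y) \<longleftrightarrow> (\<exists>n::int. x = real_of_int n)"
| "on_family p q FamP (x, y) \<longleftrightarrow> (\<exists>n::int. y = - PP p q * x + real_of_int n)"
| "on_family p q FamQ (x, y) \<longleftrightarrow> (\<exists>n::int. y = - QQ p q * x + real_of_int n)"

fun FF :: "int \<Rightarrow> int \<Rightarrow> family \<Rightarrow> real \<times> real \<Rightarrow> real" where
  "FF p q FamH (x, y) = red2 (2 * PP p q * y)"
| "FF p q FamV (x, y) = red2 (2 * PP p q * x)"
| "FF p q FamP (x, y) = red2 (PP p q * y + (PP p q)^2 * x + 1)"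
| "FF p q FamQ (x, y) = red2 (PP p q * y + PP p q * QQ p q * x + 1)"

definition hseg :: "int \<Rightarrow> int \<Rightarrow> (real \<times> real) set" where
  "hseg m n = {(x, real_of_int n) | x. real_of_int m \<le> x \<and> x \<le> real_of_int m + 1}"

definition vseg :: "int \<Rightarrow> int \<Rightarrow> (real \<times> real) set" where
  "vseg m n = {(real_of_int m, y) | y. real_of_int n \<le> y \<and> y \<le> real_of_int n + 1}"

definition horizontal_segments :: "(real \<times> real) set set" where
  "horizontal_segments = {hseg m n | m n. True}"

definition vertical_segments :: "(real \<times> real) set set" where
  "vertical_segments = {vseg m n | m n. True}"

definition light_point :: "int \<Rightarrow> int \<Rightarrow> family \<Rightarrow> family \<Rightarrow> (real \<times> real) set \<Rightarrow> real \<times> real \<Rightarrow> bool" where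
  "light_point p q A B S z \<longleftrightarrow> z \<in> S \<and> on_family p q B z \<and>
     FF p q A z * FF p q B z > 0 \<and> \<bar>FF p q B z\<bar> < \<bar>FF p q A z\<bar>"

definition light_on_horizontal :: "int \<Rightarrow> int \<Rightarrow> family \<Rightarrow> real \<times> real \<Rightarrow> bool" where
  "light_on_horizontal p q B z \<longleftrightarrow> (\<exists>S\<in>horizontal_segments. light_point p q FamH B S z)"

definition light_on_vertical :: "int \<Rightarrow> int \<Rightarrow> family \<Rightarrow> real \<times> real \<Rightarrow> bool" where
  "light_on_vertical p q B z \<longleftrightarrow> (\<exists>S\<in>vertical_segments. light_point p q FamV B S z)"

definition rho :: "real \<times> real \<Rightarrow> real \<times> real" where
  "rho z = (fst z, - snd z)"

end

theory Submission
  imports Defs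
begin

text \<open>For a light point write \<open>u = F_A(z)\<close>, \<open>v = F_B(z)\<close>, so \<open>uv > 0\<close> and \<open>|v| < |u|\<close>.
  On a horizontal segment at height \<open>n\<close>, the reflection changes the arguments of \<open>F_H\<close> and \<open>F_B\<close> by \<open>U \<mapsto> -U\<close> and \<open>V \<mapsto> V - U\<close>, where \<open>U = 2Pn\<close>; since \<open>p + q\<close> is odd, \<open>u \<noteq> 1\<close>,
  so the new values are \<open>-u\<close> and \<open>v - u\<close>, again a light pair. On a vertical segment \<open>F_V\<close> is
  unchanged, and because \<open>P + Q = 2\<close> the argument of \<open>F_Q\<close> at \<open>\<rho>(z)\<close> is \<open>U + 2 - V\<close> where \<open>V\<close> is the
  argument of \<open>F_P\<close> at \<open>z\<close>, giving the light pair \<open>(u, u - v)\<close>.\<close>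

lemma red2_bounds: "-1 < red2 t" "red2 t \<le> 1"
proof -
  define c where "c = real_of_int \<lceil>(t - 1) / 2\<rceil>"
  have "c - 1 < (t - 1) / 2" "(t - 1) / 2 \<le> c"
    using ceiling_correct[of "(t - 1) / 2"] by (auto simp: c_def)
  then show "-1 < red2 t" "red2 t \<le> 1"
    by (simp_all add: red2_def c_def[symmetric] field_simps)
qed

lemma red2_eq_self: "-1 < t \<Longrightarrow> t \<le> 1 \<Longrightarrow> red2 t = t"
  by (simp add: red2_def ceiling_eq_iff)

lemma red2_add_even: "red2 (t + 2 * of_int k) = red2 t"
proof -
  have "(t + 2 * of_int k - 1) / 2 = (t - 1) / 2 + of_int k"
    by (simp add: field_simps)
  then have "\<lceil>(t + 2 * of_int k - 1) / 2\<rceil> = \<lceil>(t - 1) / 2\<rceil> + k"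
    by (simp only: ceiling_add_of_int)
  then show ?thesis
    by (simp add: red2_def)
qed

lemma red2_decompose: "\<exists>k::int. t = red2 t + 2 * of_int k"
  by (auto simp: red2_def)

lemma red2_diff: "red2 (s - t) = red2 (red2 s - red2 t)"
proof -
  obtain k l :: int where "s = red2 s + 2 * of_int k" "t = red2 t + 2 * of_int l"
    using red2_decompose by metis
  then have "s - t = (red2 s - red2 t) + 2 * of_int (k - l)"
    by (simp add: algebra_simps)
  then show ?thesis
    by (metis red2_add_even)
qed

lemma red2_uminus: "red2 t \<noteq> 1 \<Longrightarrow> red2 (- t) = - red2 t"
  using red2_diff[of 0 t] red2_bounds[of t] by (simp add: red2_eq_self)

lemma red2_eq_oneD: "red2 t = 1 \<Longrightarrow> \<exists>k::int. t = 2 * of_int k + 1"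
  using red2_decompose[of t] by (auto simp: algebra_simps)

definition light_values :: "real \<Rightarrow> real \<Rightarrow> bool" where
  "light_values u v \<longleftrightarrow> u * v > 0 \<and> \<bar>v\<bar> < \<bar>u\<bar>"

lemma light_values_neg_diff: "light_values u v \<Longrightarrow> light_values (- u) (v - u)"
  by (auto simp: light_values_def zero_less_mult_iff abs_if mult_less_0_iff)

lemma light_values_diff: "light_values u v \<Longrightarrow> light_values u (u - v)"
  by (auto simp: light_values_def zero_less_mult_iff abs_if)

lemma light_values_red2_eq_self:
  "light_values u v \<Longrightarrow> -1 < u \<Longrightarrow> u \<le> 1 \<Longrightarrow> red2 v = v"
  by (rule red2_eq_self) (auto simp: light_values_def)

lemma light_values_red2_neg_diff:
  assumes "light_values (red2 U) (red2 V)" "red2 U \<noteq> 1"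
  shows "light_values (red2 (- U)) (red2 (V - U))"
proof -
  have light: "light_values (- red2 U) (red2 V - red2 U)"
    using assms(1) by (rule light_values_neg_diff)
  have "red2 (V - U) = red2 V - red2 U"
    using red2_diff[of V U] light_values_red2_eq_self[OF light] red2_bounds[of U] assms(2)
    by auto
  with light show ?thesis
    using assms(2) by (simp add: red2_uminus)
qed

lemma light_values_red2_diff:
  assumes "light_values (red2 U) (red2 V)"
  shows "light_values (red2 U) (red2 (U + 2 - V))"
proof -
  have light: "light_values (red2 U) (red2 U - red2 V)"
    using assms by (rule light_values_diff)
  have "red2 (U + 2 - V) = red2 (U - V)"
    using red2_add_even[of "U - V" 1] by (simp add: algebra_simps)
  also have "\<dots> = red2 U - red2 V"
    using red2_diff[of U V] light_values_red2_eq_self[OF light] red2_bounds[of U] by simp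
  finally show ?thesis
    using light by simp
qed

lemma even_rational_parameter_odd_sum: "even_rational_parameter p q \<Longrightarrow> odd (p + q)"
  by (auto simp: even_rational_parameter_def)

lemma PP_plus_QQ: "even_rational_parameter p q \<Longrightarrow> PP p q + QQ p q = 2"
proof -
  assume "even_rational_parameter p q"
  then have "real_of_int p + real_of_int q \<noteq> 0"
    by (simp add: even_rational_parameter_def)
  then have "(2 * real_of_int p + 2 * real_of_int q) / (real_of_int p + real_of_int q) = 2"
    by (simp add: field_simps)
  then show ?thesis
    by (simp add: PP_def QQ_def omega_def add_divide_distrib[symmetric])
qed

lemma red2_twice_PP_int_ne_one:
  assumes "even_rational_parameter p q"
  shows "red2 (2 * PP p q * of_int n) \<noteq> 1"
proof
  assume "red2 (2 * PP p q * of_int n) = 1"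
  then obtain k :: int where "2 * PP p q * of_int n = 2 * of_int k + 1"
    using red2_eq_oneD by blast
  moreover have "0 < real_of_int (p + q)"
    using assms by (simp add: even_rational_parameter_def)
  ultimately have "real_of_int (4 * p * n) = real_of_int ((2 * k + 1) * (p + q))"
    by (simp add: PP_def omega_def field_simps)
  then have eq: "(2 * k + 1) * (p + q) = 4 * p * n"
    by (simp only: of_int_eq_iff)
  have "odd ((2 * k + 1) * (p + q))"
    using even_rational_parameter_odd_sum[OF assms] by simp
  then show False
    unfolding eq by simp
qed

text \<open>The lines of the families \<open>\<P>\<close> and \<open>\<Q>\<close> are \<open>y = - slope \<cdot> x + n\<close>; the values for \<open>\<H>\<close> and
  \<open>\<V>\<close> are junk.\<close>

fun slope :: "int \<Rightarrow> int \<Rightarrow> family \<Rightarrow> real" where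
  "slope p q FamP = PP p q"
| "slope p q FamQ = QQ p q"
| "slope p q FamH = 0"
| "slope p q FamV = 0"

lemma on_family_oblique:
  "B \<in> {FamP, FamQ} \<Longrightarrow> on_family p q B (x, y) \<longleftrightarrow> y + slope p q B * x \<in> \<int>"
  by (auto simp: Ints_def algebra_simps)

lemma FF_oblique:
  "B \<in> {FamP, FamQ} \<Longrightarrow> FF p q B (x, y) = red2 (PP p q * (y + slope p q B * x) + 1)"
  by (auto simp: power2_eq_square algebra_simps)

lemma in_horizontal_segment_iff: "(\<exists>S\<in>horizontal_segments. z \<in> S) \<longleftrightarrow> snd z \<in> \<int>"
proof
  assume "snd z \<in> \<int>"
  then obtain n where "snd z = of_int n"
    by (auto elim: Ints_cases)
  then have "z \<in> hseg \<lfloor>fst z\<rfloor> n"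
    unfolding hseg_def mem_Collect_eq
    by (intro exI[of _ "fst z"]) (auto simp: prod_eq_iff)
  then show "\<exists>S\<in>horizontal_segments. z \<in> S"
    by (auto simp: horizontal_segments_def)
qed (auto simp: horizontal_segments_def hseg_def)

lemma in_vertical_segment_iff: "(\<exists>S\<in>vertical_segments. z \<in> S) \<longleftrightarrow> fst z \<in> \<int>"
proof
  assume "fst z \<in> \<int>"
  then obtain m where "fst z = of_int m"
    by (auto elim: Ints_cases)
  then have "z \<in> vseg m \<lfloor>snd z\<rfloor>"
    unfolding vseg_def mem_Collect_eq
    by (intro exI[of _ "snd z"]) (auto simp: prod_eq_iff)
  then show "\<exists>S\<in>vertical_segments. z \<in> S"
    by (auto simp: vertical_segments_def)
qed (auto simp: vertical_segments_def vseg_def)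

lemma light_on_horizontal_iff:
  "light_on_horizontal p q B z \<longleftrightarrow>
     snd z \<in> \<int> \<and> on_family p q B z \<and> light_values (FF p q FamH z) (FF p q B z)"
  using in_horizontal_segment_iff[of z]
  by (auto simp: light_on_horizontal_def light_point_def light_values_def)

lemma light_on_vertical_iff:
  "light_on_vertical p q B z \<longleftrightarrow>
     fst z \<in> \<int> \<and> on_family p q B z \<and> light_values (FF p q FamV z) (FF p q B z)"
  using in_vertical_segment_iff[of z]
  by (auto simp: light_on_vertical_def light_point_def light_values_def)

lemma rho_rho [simp]: "rho (rho z) = z"
  by (simp add: rho_def)

lemma light_on_horizontal_rho:
  assumes par: "even_rational_parameter p q" and B: "B \<in> {FamP, FamQ}"
    and light: "light_on_horizontal p q B z"
  shows "light_on_horizontal p q B (rho z)"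
proof -
  obtain n where n: "snd z = of_int n"
    using light by (auto simp: light_on_horizontal_iff elim: Ints_cases)
  define x where "x = fst z"
  have z: "z = (x, of_int n)"
    by (simp add: x_def n[symmetric])
  have rho_z: "rho z = (x, - of_int n)"
    by (simp add: z rho_def)
  define U where "U = 2 * PP p q * of_int n"
  define V where "V = PP p q * (of_int n + slope p q B * x) + 1"
  have "light_values (red2 U) (red2 V)"
    using light B by (simp add: light_on_horizontal_iff z FF_oblique U_def V_def)
  then have "light_values (red2 (- U)) (red2 (V - U))"
    using red2_twice_PP_int_ne_one[OF par] by (simp add: light_values_red2_neg_diff U_def)
  moreover have "FF p q B (rho z) = red2 (V - U)"
    using B by (simp add: rho_z FF_oblique U_def V_def algebra_simps)
  moreover have "on_family p q B (rho z)"
  proof -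
    have "of_int n + slope p q B * x \<in> \<int>"
      using light B by (simp add: light_on_horizontal_iff z on_family_oblique)
    then have "(of_int n + slope p q B * x) - 2 * of_int n \<in> \<int>"
      by (intro Ints_diff) simp_all
    then show ?thesis
      using B by (simp add: rho_z on_family_oblique algebra_simps)
  qed
  ultimately show ?thesis
    by (simp add: light_on_horizontal_iff rho_z U_def)
qed

lemma light_on_vertical_rho:
  assumes B1: "B1 \<in> {FamP, FamQ}" and B2: "B2 \<in> {FamP, FamQ}"
    and slopes: "slope p q B1 + slope p q B2 = 2"
    and light: "light_on_vertical p q B1 z"
  shows "light_on_vertical p q B2 (rho z)"
proof -
  obtain m where m: "fst z = of_int m"
    using light by (auto simp: light_on_vertical_iff elim: Ints_cases)
  define y where "y = snd z"
  have z: "z = (of_int m, y)"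
    by (simp add: y_def m[symmetric])
  have rho_z: "rho z = (of_int m, - y)"
    by (simp add: z rho_def)
  have slope2: "slope p q B2 = 2 - slope p q B1"
    using slopes by simp
  define U where "U = 2 * PP p q * of_int m"
  define V where "V = PP p q * (y + slope p q B1 * of_int m) + 1"
  have "light_values (red2 U) (red2 V)"
    using light B1 by (simp add: light_on_vertical_iff z FF_oblique U_def V_def)
  then have "light_values (red2 U) (red2 (U + 2 - V))"
    by (rule light_values_red2_diff)
  moreover have "FF p q B2 (rho z) = red2 (U + 2 - V)"
    using B2 by (simp add: rho_z FF_oblique slope2 U_def V_def algebra_simps)
  moreover have "on_family p q B2 (rho z)"
  proof -
    have "y + slope p q B1 * of_int m \<in> \<int>"
      using light B1 by (simp add: light_on_vertical_iff z on_family_oblique)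
    then have "2 * of_int m - (y + slope p q B1 * of_int m) \<in> \<int>"
      by (intro Ints_diff) simp_all
    then show ?thesis
      using B2 by (simp add: rho_z on_family_oblique slope2 algebra_simps)
  qed
  ultimately show ?thesis
    by (simp add: light_on_vertical_iff rho_z U_def)
qed

theorem lemma2p3:
  fixes p q :: int and z :: "real \<times> real"
  assumes "even_rational_parameter p q"
  shows "(light_on_horizontal p q FamP z \<longleftrightarrow> light_on_horizontal p q FamP (rho z))
       \<and> (light_on_horizontal p q FamQ z \<longleftrightarrow> light_on_horizontal p q FamQ (rho z))
       \<and> (light_on_vertical p q FamP z \<longleftrightarrow> light_on_vertical p q FamQ (rho z))"
proof -
  have slopes: "slope p q FamP + slope p q FamQ = 2" "slope p q FamQ + slope p q FamP = 2"
    using PP_plus_QQ[OF assms] by simp_all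
  have horizontal: "light_on_horizontal p q B (rho w) \<longleftrightarrow> light_on_horizontal p q B w"
    if "B \<in> {FamP, FamQ}" for B w
    using light_on_horizontal_rho[OF assms that, of w]
      light_on_horizontal_rho[OF assms that, of "rho w"] by auto
  have vertical: "light_on_vertical p q FamP z \<longleftrightarrow> light_on_vertical p q FamQ (rho z)"
    using light_on_vertical_rho[of FamP FamQ p q z]
      light_on_vertical_rho[of FamQ FamP p q "rho z"] slopes by auto
  show ?thesis
    using horizontal vertical by simp
qed

end
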